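(* Let $G$ be a connected graph. The vertex sets of the connected components of the distance-2 graph $G_2$ are independent sets in $G$ if and only if $G$ is bipartite or complete multipartite.
   Context: The distance-2 graph $G_2$ of $G$ has vertex set $V(G)$, two vertices being adjacent iff their distance in $G$ is exactly 2. *)

theory Defs
  imports Main "HOL-Library.Disjoint_Sets"
begin

definition simple_graph :: "'a set \<Rightarrow> ('a \<Rightarrow> 'a \<Rightarrow> bool) \<Rightarrow> bool" where
  "simple_graph V E \<longleftrightarrow> finite V \<and> (\<forall>x y. E x y \<longrightarrow> x \<in> V \<and> y \<in> V)
     \<and> (\<forall>x y. E x y \<longrightarrow> E y x) \<and> (\<forall>x. \<not> E x x)"

definition adj :: "'a set \<Rightarrow> ('a \<Rightarrow> 'a \<Rightarrow> bool) \<Rightarrow> 'a \<Rightarrow> 'a \<Rightarrow> bool" where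
  "adj V E x y \<longleftrightarrow> x \<in> V \<and> y \<in> V \<and> E x y"

definition connected_graph :: "'a set \<Rightarrow> ('a \<Rightarrow> 'a \<Rightarrow> bool) \<Rightarrow> bool" where
  "connected_graph V E \<longleftrightarrow> V \<noteq> {} \<and> (\<forall>x\<in>V. \<forall>y\<in>V. (adj V E)\<^sup>*\<^sup>* x y)"

definition gdist :: "'a set \<Rightarrow> ('a \<Rightarrow> 'a \<Rightarrow> bool) \<Rightarrow> 'a \<Rightarrow> 'a \<Rightarrow> nat" where
  "gdist V E x y = (LEAST n. (adj V E ^^ n) x y)"

definition dist2_adj :: "'a set \<Rightarrow> ('a \<Rightarrow> 'a \<Rightarrow> bool) \<Rightarrow> 'a \<Rightarrow> 'a \<Rightarrow> bool" where
  "dist2_adj V E x y \<longleftrightarrow> x \<in> V \<and> y \<in> V \<and> (\<exists>n. (adj V E ^^ n) x y) \<and> gdist V E x y = 2"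

definition component_sets :: "'a set \<Rightarrow> ('a \<Rightarrow> 'a \<Rightarrow> bool) \<Rightarrow> 'a set set" where
  "component_sets V R = {{y \<in> V. (adj V R)\<^sup>*\<^sup>* x y} | x. x \<in> V}"

definition independent_set :: "('a \<Rightarrow> 'a \<Rightarrow> bool) \<Rightarrow> 'a set \<Rightarrow> bool" where
  "independent_set E S \<longleftrightarrow> (\<forall>x\<in>S. \<forall>y\<in>S. \<not> E x y)"

definition bipartite :: "'a set \<Rightarrow> ('a \<Rightarrow> 'a \<Rightarrow> bool) \<Rightarrow> bool" where
  "bipartite V E \<longleftrightarrow> (\<exists>A B. A \<union> B = V \<and> A \<inter> B = {} \<and> independent_set E A \<and> independent_set E B)"

definition complete_multipartite :: "'a set \<Rightarrow> ('a \<Rightarrow> 'a \<Rightarrow> bool) \<Rightarrow> bool" where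
  "complete_multipartite V E \<longleftrightarrow> (\<exists>P. partition_on V P \<and> (\<forall>S\<in>P. independent_set E S)
     \<and> (\<forall>S\<in>P. \<forall>T\<in>P. S \<noteq> T \<longrightarrow> (\<forall>x\<in>S. \<forall>y\<in>T. E x y)))"

end

theory Submission
  imports Defs
begin

text \<open>Write \<open>x \<approx> y\<close> when \<open>x\<close> and \<open>y\<close> lie in the same component of \<open>G\<^sub>2\<close>. Splitting a
  shortest path into steps of length two shows that vertices at even distance are
  \<open>\<approx>\<close>-related. If every \<open>\<approx>\<close>-class is independent, \<open>x \<approx> y\<close> forces \<open>d(x, y)\<close> to be even:
  otherwise the neighbour \<open>z\<close> of \<open>y\<close> on a shortest path from \<open>x\<close> is at even distance from
  \<open>x\<close>, so \<open>z \<approx> x \<approx> y\<close> although \<open>z\<close> and \<open>y\<close> are adjacent. Thus \<open>\<approx>\<close> is ``even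
  distance''. When all distances are at most 2, two vertices in different classes are then at
  distance 1, so the classes are the parts of a complete multipartite graph. Otherwise take a
  shortest path \<open>a p q b\<close> of length 3: a neighbour \<open>x\<close> of \<open>a\<close> outside the class of \<open>p\<close>
  would be adjacent to \<open>p\<close>, then to \<open>q \<approx> a\<close>, then to \<open>b \<approx> p\<close>, giving \<open>d(a, b) \<le> 2\<close>.
  Hence all neighbours of \<open>a\<close>, and with them all vertices at odd distance from \<open>a\<close>, form
  one class, and the two parities give a bipartition. Conversely, in a bipartite or complete
  multipartite graph any two vertices at distance 2 lie in the same part, so each
  \<open>\<approx>\<close>-class lies inside one part.\<close>

locale connected_simple_graph =
  fixes V :: "'a set" and E :: "'a \<Rightarrow> 'a \<Rightarrow> bool"
  assumes simple: "simple_graph V E" and connected: "connected_graph V E"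
begin

abbreviation d :: "'a \<Rightarrow> 'a \<Rightarrow> nat" where
  "d \<equiv> gdist V E"

abbreviation dist2_reach :: "'a \<Rightarrow> 'a \<Rightarrow> bool" where
  "dist2_reach \<equiv> (adj V (dist2_adj V E))\<^sup>*\<^sup>*"

lemma adj_eq: "adj V E = E"
  using simple by (auto simp: adj_def simple_graph_def fun_eq_iff)

lemma E_sym: "E x y \<Longrightarrow> E y x"
  using simple by (auto simp: simple_graph_def)

lemma E_irrefl: "\<not> E x x"
  using simple by (auto simp: simple_graph_def)

lemma E_in_V: "E x y \<Longrightarrow> x \<in> V \<and> y \<in> V"
  using simple by (auto simp: simple_graph_def)

lemma walk_sym: "(E ^^ n) x y \<Longrightarrow> (E ^^ n) y x"
proof (induction n arbitrary: y)
  case (Suc n)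
  then obtain z where "(E ^^ n) z x" "E y z"
    by (auto intro: E_sym)
  then have "(E ^^ (1 + n)) y x"
    unfolding relpowp_add by auto
  then show ?case by simp
qed simp

lemma walk_endpoints: "(E ^^ n) x y \<Longrightarrow> 0 < n \<Longrightarrow> x \<in> V \<and> y \<in> V"
proof (induction n arbitrary: y)
  case (Suc n)
  then obtain z where "(E ^^ n) x z" "E z y" by auto
  then show ?case
    using Suc.IH E_in_V by (cases n) auto
qed simp

lemma gdist_walk: "x \<in> V \<Longrightarrow> y \<in> V \<Longrightarrow> (E ^^ d x y) x y"
  using connected unfolding connected_graph_def gdist_def rtranclp_power adj_eq
  by (meson LeastI_ex)

lemma gdist_le: "(E ^^ n) x y \<Longrightarrow> d x y \<le> n"
  unfolding gdist_def adj_eq by (rule Least_le)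

lemma gdist_sym: "x \<in> V \<Longrightarrow> y \<in> V \<Longrightarrow> d x y = d y x"
  by (meson antisym gdist_le gdist_walk walk_sym)

lemma gdist_eq_0_iff: "x \<in> V \<Longrightarrow> y \<in> V \<Longrightarrow> d x y = 0 \<longleftrightarrow> x = y"
  using gdist_walk[of x y] gdist_le[of 0 x y] by auto

lemma gdist_eq_1_iff: "x \<in> V \<Longrightarrow> y \<in> V \<Longrightarrow> d x y = 1 \<longleftrightarrow> E x y"
proof
  assume "x \<in> V" "y \<in> V" "d x y = 1"
  then show "E x y" using gdist_walk[of x y] by auto
next
  assume "x \<in> V" "y \<in> V" "E x y"
  then show "d x y = 1"
    using gdist_le[of 1 x y] gdist_eq_0_iff[of x y] E_irrefl by fastforce
qed

lemma gdist_triangle: "x \<in> V \<Longrightarrow> y \<in> V \<Longrightarrow> z \<in> V \<Longrightarrow> d x z \<le> d x y + d y z"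
  by (rule gdist_le) (auto simp: relpowp_add intro: gdist_walk)

lemma geodesic_point:
  assumes "x \<in> V" "y \<in> V" "j \<le> d x y"
  obtains z where "z \<in> V" "d x z = j" "d z y = d x y - j"
proof -
  have "(E ^^ (j + (d x y - j))) x y"
    using gdist_walk[OF assms(1,2)] assms(3) by simp
  then obtain z where xz: "(E ^^ j) x z" and zy: "(E ^^ (d x y - j)) z y"
    unfolding relpowp_add by auto
  have "z \<in> V"
    using xz walk_endpoints[OF xz] assms(1) by (cases j) auto
  moreover have "d x z \<le> j" "d z y \<le> d x y - j"
    using xz zy by (auto intro: gdist_le)
  moreover have "d x y \<le> d x z + d z y"
    using gdist_triangle assms(1,2) \<open>z \<in> V\<close> by blast
  ultimately show thesis
    using assms(3) that by force
qed

lemma dist2_step_iff: "adj V (dist2_adj V E) x y \<longleftrightarrow> x \<in> V \<and> y \<in> V \<and> d x y = 2"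
  using gdist_walk unfolding adj_def dist2_adj_def adj_eq by blast

lemma dist2_reach_sym: "dist2_reach x y \<Longrightarrow> dist2_reach y x"
  by (induction rule: rtranclp_induct)
    (auto simp: dist2_step_iff gdist_sym intro: converse_rtranclp_into_rtranclp)

lemma dist2_reach_in_V: "dist2_reach x y \<Longrightarrow> x \<in> V \<Longrightarrow> y \<in> V"
  by (induction rule: rtranclp_induct) (auto simp: dist2_step_iff)

lemma dist2_reach_if_even_gdist:
  "x \<in> V \<Longrightarrow> y \<in> V \<Longrightarrow> even (d x y) \<Longrightarrow> dist2_reach x y"
proof (induction "d x y" arbitrary: x rule: less_induct)
  case less
  show ?case
  proof (cases "d x y = 0")
    case True
    then show ?thesis using less.prems gdist_eq_0_iff by simp
  next
    case False
    moreover have "d x y \<noteq> 1" using less.prems(3) by auto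
    ultimately have "2 \<le> d x y" by linarith
    then obtain z where z: "z \<in> V" "d x z = 2" "d z y = d x y - 2"
      using geodesic_point less.prems(1,2) by metis
    then have "dist2_reach z y"
      using less False by simp
    moreover have "adj V (dist2_adj V E) x z"
      using z less.prems(1) by (simp add: dist2_step_iff)
    ultimately show ?thesis by (simp add: converse_rtranclp_into_rtranclp)
  qed
qed

definition dist2_classes_independent :: bool where
  "dist2_classes_independent \<longleftrightarrow> (\<forall>x y. x \<in> V \<longrightarrow> dist2_reach x y \<longrightarrow> \<not> E x y)"

lemma dist2_class_independent:
  assumes dist2_classes_independent "v \<in> V"
  shows "independent_set E {x \<in> V. dist2_reach v x}"
  unfolding independent_set_def
proof (intro ballI)
  fix y z assume "y \<in> {x \<in> V. dist2_reach v x}" "z \<in> {x \<in> V. dist2_reach v x}"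
  then have "y \<in> V" "dist2_reach y z"
    using rtranclp_trans[OF dist2_reach_sym] by auto
  then show "\<not> E y z"
    using assms(1) unfolding dist2_classes_independent_def by blast
qed

lemma component_sets_independent_iff:
  "(\<forall>C\<in>component_sets V (dist2_adj V E). independent_set E C) \<longleftrightarrow> dist2_classes_independent"
proof
  assume "\<forall>C\<in>component_sets V (dist2_adj V E). independent_set E C"
  then have "independent_set E {y \<in> V. dist2_reach x y}" if "x \<in> V" for x
    using that unfolding component_sets_def by blast
  then show dist2_classes_independent
    unfolding dist2_classes_independent_def independent_set_def
    using dist2_reach_in_V by blast
next
  assume dist2_classes_independent
  then show "\<forall>C\<in>component_sets V (dist2_adj V E). independent_set E C"
    unfolding component_sets_def using dist2_class_independent by blast
qed

lemma dist2_classes_independentI: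
  assumes "equivp Q"
    and "\<And>x y. x \<in> V \<Longrightarrow> y \<in> V \<Longrightarrow> d x y = 2 \<Longrightarrow> Q x y"
    and "\<And>x y. Q x y \<Longrightarrow> \<not> E x y"
  shows dist2_classes_independent
proof -
  have "Q x y" if "dist2_reach x y" for x y
    using that
    by (induction rule: rtranclp_induct)
      (use assms(1,2) in \<open>auto simp: dist2_step_iff equivp_reflp equivp_def\<close>)
  then show ?thesis
    unfolding dist2_classes_independent_def using assms(3) by blast
qed

lemma bipartite_imp_dist2_classes_independent:
  assumes "bipartite V E"
  shows dist2_classes_independent
proof -
  obtain A B where AB: "A \<union> B = V" "A \<inter> B = {}" "independent_set E A" "independent_set E B"
    using assms unfolding bipartite_def by blast
  show ?thesis
  proof (rule dist2_classes_independentI[where Q = "\<lambda>x y. x \<in> A \<longleftrightarrow> y \<in> A"])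
    show "equivp (\<lambda>x y. x \<in> A \<longleftrightarrow> y \<in> A)"
      by (auto intro: equivpI reflpI sympI transpI)
  next
    fix x y assume xy: "x \<in> V" "y \<in> V" "d x y = 2"
    then obtain z where "z \<in> V" "E x z" "E z y"
      using geodesic_point[of x y 1] gdist_eq_1_iff by (metis diff_add_inverse le_add1 one_add_one)
    then show "x \<in> A \<longleftrightarrow> y \<in> A"
      using AB xy unfolding independent_set_def by blast
  next
    fix x y assume "x \<in> A \<longleftrightarrow> y \<in> A"
    then show "\<not> E x y"
      using AB simple unfolding independent_set_def simple_graph_def by blast
  qed
qed

lemma complete_multipartite_imp_dist2_classes_independent:
  assumes "complete_multipartite V E"
  shows dist2_classes_independent
proof -
  obtain P where P: "partition_on V P" "\<forall>S\<in>P. independent_set E S"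
    "\<forall>S\<in>P. \<forall>T\<in>P. S \<noteq> T \<longrightarrow> (\<forall>x\<in>S. \<forall>y\<in>T. E x y)"
    using assms unfolding complete_multipartite_def by blast
  have cover: "\<Union>P = V" and disj: "\<And>S T. S \<in> P \<Longrightarrow> T \<in> P \<Longrightarrow> S \<noteq> T \<Longrightarrow> S \<inter> T = {}"
    using P(1) unfolding partition_on_def disjoint_def by auto
  define Q where "Q x y \<longleftrightarrow> (\<exists>S\<in>P. x \<in> S \<and> y \<in> S) \<or> x = y" for x y
  show ?thesis
  proof (rule dist2_classes_independentI[of Q])
    show "equivp Q"
      using disj unfolding Q_def by (intro equivpI reflpI sympI transpI) blast+
  next
    fix x y assume xy: "x \<in> V" "y \<in> V" "d x y = 2"
    then have "\<not> E x y" "x \<noteq> y"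
      using xy gdist_eq_1_iff[of x y] gdist_eq_0_iff[of x y] by auto
    then show "Q x y"
      using cover xy P(3) unfolding Q_def by blast
  next
    fix x y assume "Q x y"
    then show "\<not> E x y"
      using P(2) E_irrefl unfolding Q_def independent_set_def by blast
  qed
qed

lemma dist2_reach_iff_even_gdist:
  assumes dist2_classes_independent "x \<in> V" "y \<in> V"
  shows "dist2_reach x y \<longleftrightarrow> even (d x y)"
proof
  assume reach: "dist2_reach x y"
  show "even (d x y)"
  proof (rule ccontr)
    assume odd: "odd (d x y)"
    obtain z where z: "z \<in> V" "d x z = d x y - 1" "d z y = d x y - (d x y - 1)"
      using geodesic_point[OF assms(2,3) diff_le_self] .
    have "d z y = 1"
      using odd_pos[OF odd] z(3) by simp
    have "dist2_reach z x"
      using z odd assms(2) by (intro dist2_reach_if_even_gdist) (auto simp: gdist_sym)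
    then have "dist2_reach z y"
      using reach by (rule rtranclp_trans)
    moreover have "E z y"
      using \<open>d z y = 1\<close> z(1) assms(3) gdist_eq_1_iff by simp
    ultimately show False
      using assms(1) z(1) unfolding dist2_classes_independent_def by blast
  qed
qed (use assms dist2_reach_if_even_gdist in blast)

lemma adjacent_if_close_and_not_dist2_reach:
  assumes dist2_classes_independent "x \<in> V" "y \<in> V" "d x y \<le> 2" "\<not> dist2_reach x y"
  shows "E x y"
proof -
  have "odd (d x y)"
    using assms dist2_reach_iff_even_gdist by blast
  then have "d x y \<noteq> 0" "d x y \<noteq> 2"
    by (auto simp: odd_pos)
  then have "d x y = 1"
    using assms(4) by linarith
  then show ?thesis
    using assms(2,3) gdist_eq_1_iff by simp
qed

lemma complete_multipartite_if_diameter_le_2: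
  assumes dist2_classes_independent "\<forall>x\<in>V. \<forall>y\<in>V. d x y \<le> 2"
  shows "complete_multipartite V E"
proof -
  define P where "P = {{y \<in> V. dist2_reach x y} | x. x \<in> V}"
  have same_class: "{y \<in> V. dist2_reach x y} = {y \<in> V. dist2_reach z y}" if "dist2_reach x z" for x z
    using rtranclp_trans[OF that] rtranclp_trans[OF dist2_reach_sym[OF that]] by blast
  have "partition_on V P"
  proof (rule partition_onI)
    fix S T assume "S \<in> P" "T \<in> P" "S \<noteq> T"
    then obtain x z where S: "S = {y \<in> V. dist2_reach x y}" and T: "T = {y \<in> V. dist2_reach z y}"
      unfolding P_def by blast
    have "\<not> dist2_reach x w" if "dist2_reach z w" for w
      using \<open>S \<noteq> T\<close> same_class[OF rtranclp_trans[OF that dist2_reach_sym]] S T by blast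
    then show "disjnt S T"
      unfolding disjnt_def S T by blast
  qed (auto simp: P_def)
  moreover have "\<forall>S\<in>P. independent_set E S"
    unfolding P_def using dist2_class_independent assms(1) by blast
  moreover have "E x y" if "S \<in> P" "T \<in> P" "S \<noteq> T" "x \<in> S" "y \<in> T" for S T x y
  proof -
    have "x \<in> V" "y \<in> V" "S = {z \<in> V. dist2_reach x z}" "T = {z \<in> V. dist2_reach y z}"
      using that same_class unfolding P_def by auto
    then have "\<not> dist2_reach x y"
      using that(3) same_class by blast
    then show ?thesis
      using adjacent_if_close_and_not_dist2_reach assms \<open>x \<in> V\<close> \<open>y \<in> V\<close> by blast
  qed
  ultimately show ?thesis
    unfolding complete_multipartite_def by blast
qed

lemma neighbour_dist2_reach_if_geodesic_3:
  assumes ind: dist2_classes_independent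
    and V: "a \<in> V" "p \<in> V" "q \<in> V" "b \<in> V" "x \<in> V"
    and path: "E a p" "E p q" "E q b" "d a b = 3"
    and "E a x"
  shows "dist2_reach p x"
proof (rule ccontr)
  assume "\<not> dist2_reach p x"
  have close: "E y z" if "y \<in> V" "z \<in> V" "d y z \<le> 2" "\<not> dist2_reach y z" for y z
    using adjacent_if_close_and_not_dist2_reach[OF ind that] .
  have reach: "dist2_reach y z \<longleftrightarrow> even (d y z)" if "y \<in> V" "z \<in> V" for y z
    using dist2_reach_iff_even_gdist[OF ind that] .
  have one: "d y z = 1" if "y \<in> V" "z \<in> V" "E y z" for y z
    using gdist_eq_1_iff that by blast
  have "d a q \<le> 2" "3 \<le> d a q + 1" "d p b \<le> 2" "3 \<le> 1 + d p b"
    using gdist_triangle[of a p q] gdist_triangle[of a q b] gdist_triangle[of p q b]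
      gdist_triangle[of a p b] one V path by fastforce+
  then have "d a q = 2" "d p b = 2"
    by simp_all
  have "E p x"
    using close[of p x] gdist_triangle[of p a x] gdist_sym[of p a] one[of a x] one[of a p]
      V \<open>E a x\<close> path \<open>\<not> dist2_reach p x\<close> by auto
  have "dist2_reach a q" "\<not> dist2_reach a x"
    using reach[of a x] reach[of a q] one[of a x] V \<open>E a x\<close> \<open>d a q = 2\<close> by auto
  then have "E q x"
    using close[of q x] gdist_triangle[of q p x] gdist_sym[of q p] one[of p x] one[of p q]
      V path \<open>E p x\<close> by (auto intro: rtranclp_trans)
  have "dist2_reach p b"
    using reach[of p b] V \<open>d p b = 2\<close> by auto
  then have "E b x"
    using close[of b x] gdist_triangle[of b q x] gdist_sym[of b q] one[of q x] one[of q b]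
      V path \<open>E q x\<close> \<open>\<not> dist2_reach p x\<close> by (auto intro: rtranclp_trans)
  then have "d a b \<le> 2"
    using gdist_triangle[of a x b] one[of a x] one[of x b] E_sym V \<open>E a x\<close> by fastforce
  then show False
    using path by simp
qed

lemma bipartite_if_neighbours_dist2_reach:
  assumes ind: dist2_classes_independent and "a \<in> V" "p \<in> V"
    and neighbours: "\<And>x. E a x \<Longrightarrow> dist2_reach p x"
  shows "bipartite V E"
proof -
  define A where "A = {x \<in> V. even (d a x)}"
  define B where "B = {x \<in> V. odd (d a x)}"
  have "A \<subseteq> {x \<in> V. dist2_reach a x}"
    using dist2_reach_iff_even_gdist[OF ind] assms(2) unfolding A_def by blast
  then have "independent_set E A"
    using dist2_class_independent[OF ind assms(2)] unfolding independent_set_def by blast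
  moreover have "B \<subseteq> {x \<in> V. dist2_reach p x}"
  proof
    fix x assume "x \<in> B"
    then have x: "x \<in> V" "odd (d a x)"
      unfolding B_def by auto
    then obtain z where z: "z \<in> V" "d a z = 1" "d z x = d a x - 1"
      using geodesic_point[of a x 1] assms(2) odd_pos by (auto simp: Suc_le_eq)
    have "dist2_reach p z"
      using neighbours z assms(2) gdist_eq_1_iff by auto
    moreover have "dist2_reach z x"
      using dist2_reach_if_even_gdist z x by (simp add: odd_pos)
    ultimately show "x \<in> {x \<in> V. dist2_reach p x}"
      using x rtranclp_trans by fastforce
  qed
  then have "independent_set E B"
    using dist2_class_independent[OF ind assms(3)] unfolding independent_set_def by blast
  moreover have "A \<union> B = V" "A \<inter> B = {}"
    unfolding A_def B_def by auto
  ultimately show ?thesis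
    unfolding bipartite_def by blast
qed

lemma bipartite_if_far_pair:
  assumes ind: dist2_classes_independent and "a \<in> V" "c \<in> V" "2 < d a c"
  shows "bipartite V E"
proof -
  obtain b where b: "b \<in> V" "d a b = 3"
    using geodesic_point[of a c 3] assms(2-4) by auto
  obtain p where p: "p \<in> V" "d a p = 1" "d p b = 2"
    using geodesic_point[of a b 1] assms(2) b by auto
  obtain q where q: "q \<in> V" "d p q = 1" "d q b = 1"
    using geodesic_point[of p b 1] p b by auto
  have "E a p" "E p q" "E q b"
    using gdist_eq_1_iff assms(2) b p q by auto
  then have "dist2_reach p x" if "E a x" for x
    using neighbour_dist2_reach_if_geodesic_3[OF ind] assms(2) b p q that E_in_V by blast
  then show ?thesis
    using bipartite_if_neighbours_dist2_reach[OF ind assms(2) p(1)] by blast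
qed

end

theorem lemma4p9:
  fixes V :: "'a set" and E :: "'a \<Rightarrow> 'a \<Rightarrow> bool"
  assumes "simple_graph V E" and "connected_graph V E"
  shows "(\<forall>C\<in>component_sets V (dist2_adj V E). independent_set E C)
         \<longleftrightarrow> bipartite V E \<or> complete_multipartite V E"
proof -
  interpret connected_simple_graph V E
    using assms by unfold_locales
  have "bipartite V E \<or> complete_multipartite V E" if dist2_classes_independent
  proof (cases "\<forall>x\<in>V. \<forall>y\<in>V. d x y \<le> 2")
    case True
    then show ?thesis
      using complete_multipartite_if_diameter_le_2 that by blast
  next
    case False
    then show ?thesis
      using bipartite_if_far_pair that by (meson not_le)
  qed
  then show ?thesis
    unfolding component_sets_independent_iff
    using bipartite_imp_dist2_classes_independent
      complete_multipartite_imp_dist2_classes_independent by blast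
qed

end
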